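(* Let $\ell\geq k$ be positive integers, let $\lambda\in\mathcal{P}_{\rm sq}^k$ and let $\mu\in\mathcal{P}^\ell$. Then $\mu\in\mathcal{P}^\ell(\lambda)$ if and only if there exists $b\in[\ell-k+1]$ such that: (i) $\mu(b)=b+k-1$ and $\mu(b+k-1)=b$; (ii) if $1\leq i<b$ then $\mu(\mu(i))>i$; (iii) if $b+k-1<i\leq \ell$ then $\mu(\mu(i))<i$; (iv) if $\tilde\lambda\in\mathcal{P}_{\rm sq}^k$ is defined by $\tilde\lambda(i)=\mu(b+i-1)-b+1$ for $1\leq i\leq k$, then $\tilde\lambda\in\{\lambda,\tau_k(\lambda)\}$.
   Context: For a positive integer $n$, $[n]=\{1,\dots,n\}$. A partition with $n$ parts is a sequence $\lambda=(\lambda_1,\dots,\lambda_n)$ of positive integers with $\lambda_1\geq\dots\geq\lambda_n>0$. For $n,k\in\mathbb{Z}^+$, $\mathcal{P}^{n,k}$ is the set of partitions with exactly $n$ parts and $\lambda_1\leq k$; such $\lambda$ is regarded as a weakly decreasing function $[n]\to[k]$, $\lambda(i)=\lambda_i$. Set $\mathcal{P}^k=\mathcal{P}^{k,k}$ (so elements of $\mathcal{P}^k$ are decreasing maps $[k]\to[k]$ and can be composed with themselves). The map $\tau_k:\mathcal{P}^{n,k}\to\mathcal{P}^{n,k}$ is $\tau_k(\lambda_1,\dots,\lambda_n)=(k+1-\lambda_n,\dots,k+1-\lambda_1)$. Let $\mathcal{P}_{\rm sq}^k=\{\lambda\in\mathcal{P}^k:\lambda_1=k,\ \lambda_k=1\}$.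 For $\lambda\in\mathcal{P}^k$ and $\ell\geq k$, define subsets $\mathcal{P}^\ell(\lambda)\subseteq\mathcal{P}^\ell$ inductively: $\mathcal{P}^k(\lambda)=\{\lambda,\tau_k(\lambda)\}$, and for $\ell>k$, $\mathcal{P}^\ell(\lambda)=\mathcal{P}^\ell_{\rm d}(\lambda)\cup\tau_\ell(\mathcal{P}^\ell_{\rm d}(\lambda))$ where $\mathcal{P}^\ell_{\rm d}(\lambda)=\{\mu\in\mathcal{P}^\ell:(\mu_1,\dots,\mu_{\ell-1})\in\mathcal{P}^{\ell-1}(\lambda)\}$. *)

theory Defs
  imports Main
begin

text \<open>A partition with n parts and largest part at most k is encoded as a function
  nat => nat which is weakly decreasing on {1..n} with values in {1..k}, and which
  is 0 outside {1..n} (so that partitions are determined by their parts).\<close>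

definition Part :: "nat \<Rightarrow> nat \<Rightarrow> (nat \<Rightarrow> nat) set" where
  "Part n k = {lam. (\<forall>i. 1 \<le> i \<and> i \<le> n \<longrightarrow> 1 \<le> lam i \<and> lam i \<le> k)
                  \<and> (\<forall>i j. 1 \<le> i \<and> i \<le> j \<and> j \<le> n \<longrightarrow> lam j \<le> lam i)
                  \<and> (\<forall>i. i = 0 \<or> n < i \<longrightarrow> lam i = 0)}"

definition tau :: "nat \<Rightarrow> nat \<Rightarrow> (nat \<Rightarrow> nat) \<Rightarrow> (nat \<Rightarrow> nat)" where
  "tau k n lam = (\<lambda>i. if 1 \<le> i \<and> i \<le> n then k + 1 - lam (n + 1 - i) else 0)"

definition Psq :: "nat \<Rightarrow> (nat \<Rightarrow> nat) set" where
  "Psq k = {lam \<in> Part k k. lam 1 = k \<and> lam k = 1}"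

definition trunc :: "nat \<Rightarrow> (nat \<Rightarrow> nat) \<Rightarrow> (nat \<Rightarrow> nat)" where
  "trunc m mu = (\<lambda>i. if i \<le> m then mu i else 0)"

text \<open>Pgen lam k d = P^{k+d}(lam).\<close>
fun Pgen :: "(nat \<Rightarrow> nat) \<Rightarrow> nat \<Rightarrow> nat \<Rightarrow> (nat \<Rightarrow> nat) set" where
  "Pgen lam k 0 = {lam, tau k k lam}"
| "Pgen lam k (Suc d) =
     (let l = k + Suc d;
          Pd = {mu \<in> Part l l. trunc (l - 1) mu \<in> Pgen lam k d}
      in Pd \<union> tau l l ` Pd)"

definition Pell :: "(nat \<Rightarrow> nat) \<Rightarrow> nat \<Rightarrow> nat \<Rightarrow> (nat \<Rightarrow> nat) set" where
  "Pell lam k l = Pgen lam k (l - k)"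

end

theory Submission
  imports Defs
begin

text \<open>
  Call \<open>b\<close> an anchor of \<open>\<mu>\<close> if conditions (i)--(iv) hold. The involution
  \<open>\<tau>\<^sub>l\<close> maps anchors to anchors (\<open>b \<mapsto> l + 2 - k - b\<close>, and the partition of (iv)
  is replaced by its image under \<open>\<tau>\<^sub>k\<close>), and an anchor survives adding or deleting a
  last part as long as the block \<open>[b, b + k - 1]\<close> lies in \<open>[1, l - 1]\<close> and
  \<open>\<mu>\<^sub>1 \<le> l - 1\<close>. If \<open>\<mu>\<close> has an anchor but violates one of these two conditions,
  then (i) and (ii) force \<open>\<tau>\<^sub>l \<mu>\<close> to satisfy both. Hence the partitions having an
  anchor obey the same recursion as \<open>P\<^sup>l(\<lambda>)\<close>, and induction on \<open>l\<close> proves the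
  theorem.
\<close>

lemma PartD:
  assumes "mu \<in> Part n k"
  shows "\<And>i. 1 \<le> i \<Longrightarrow> i \<le> n \<Longrightarrow> 1 \<le> mu i \<and> mu i \<le> k"
    and "\<And>i j. 1 \<le> i \<Longrightarrow> i \<le> j \<Longrightarrow> j \<le> n \<Longrightarrow> mu j \<le> mu i"
    and "\<And>i. i = 0 \<or> n < i \<Longrightarrow> mu i = 0"
  using assms by (auto simp: Part_def)

lemma PartI:
  assumes "\<And>i. 1 \<le> i \<Longrightarrow> i \<le> n \<Longrightarrow> 1 \<le> mu i \<and> mu i \<le> k"
    and "\<And>i j. 1 \<le> i \<Longrightarrow> i \<le> j \<Longrightarrow> j \<le> n \<Longrightarrow> mu j \<le> mu i"
    and "\<And>i. i = 0 \<or> n < i \<Longrightarrow> mu i = 0"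
  shows "mu \<in> Part n k"
  using assms by (auto simp: Part_def)

lemma tau_apply: "1 \<le> i \<Longrightarrow> i \<le> n \<Longrightarrow> tau k n mu i = k + 1 - mu (n + 1 - i)"
  by (simp add: tau_def)

lemma tau_Part:
  assumes "mu \<in> Part n k"
  shows "tau k n mu \<in> Part n k"
proof (rule PartI)
  note P = PartD[OF assms]
  show "1 \<le> tau k n mu i \<and> tau k n mu i \<le> k" if "1 \<le> i" "i \<le> n" for i
  proof -
    have "1 \<le> mu (n + 1 - i) \<and> mu (n + 1 - i) \<le> k" using P(1) that by simp
    then show ?thesis unfolding tau_apply[OF that] by linarith
  qed
  show "tau k n mu j \<le> tau k n mu i" if "1 \<le> i" "i \<le> j" "j \<le> n" for i j
  proof -
    have "mu (n + 1 - i) \<le> mu (n + 1 - j)" "mu (n + 1 - j) \<le> k" using P(1,2) that by simp_all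
    then show ?thesis using that by (simp add: tau_apply)
  qed
qed (auto simp: tau_def)

lemma tau_tau:
  assumes "mu \<in> Part n k"
  shows "tau k n (tau k n mu) = mu"
proof
  fix i
  note P = PartD[OF assms]
  show "tau k n (tau k n mu) i = mu i"
  proof (cases "1 \<le> i \<and> i \<le> n")
    case True
    then show ?thesis using P(1)[of i] by (auto simp: tau_def)
  qed (use P(3)[of i] in \<open>auto simp: tau_def\<close>)
qed

lemma trunc_Part:
  assumes "mu \<in> Part (Suc n) (Suc n)" and "mu 1 \<le> n"
  shows "trunc n mu \<in> Part n n"
proof (rule PartI)
  note P = PartD[OF assms(1)]
  show "1 \<le> trunc n mu i \<and> trunc n mu i \<le> n" if "1 \<le> i" "i \<le> n" for i
    using P(1)[of i] P(2)[of 1 i] assms(2) that by (simp add: trunc_def)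
  show "trunc n mu j \<le> trunc n mu i" if "1 \<le> i" "i \<le> j" "j \<le> n" for i j
    using P(2)[of i j] that by (simp add: trunc_def)
  show "trunc n mu i = 0" if "i = 0 \<or> n < i" for i
    using P(3)[of 0] that by (auto simp: trunc_def)
qed

lemma trunc_comp:
  assumes "trunc n mu \<in> Part n n" and "1 \<le> i" and "i \<le> n"
  shows "trunc n mu (trunc n mu i) = mu (mu i)"
  using PartD(1)[OF assms(1) assms(2,3)] assms(3) by (simp add: trunc_def)

lemma Pgen_Part:
  assumes "lam \<in> Part k k"
  shows "Pgen lam k d \<subseteq> Part (k + d) (k + d)"
  by (induction d) (use assms tau_Part in \<open>auto simp: Let_def\<close>)

definition block :: "nat \<Rightarrow> nat \<Rightarrow> (nat \<Rightarrow> nat) \<Rightarrow> (nat \<Rightarrow> nat)" where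
  "block k b mu = (\<lambda>i. if 1 \<le> i \<and> i \<le> k then mu (b + i - 1) - b + 1 else 0)"

lemma block_1:
  assumes "mu \<in> Part n n"
  shows "block n 1 mu = mu"
proof
  fix i
  show "block n 1 mu i = mu i"
    using PartD(1)[OF assms, of i] PartD(3)[OF assms, of i]
    by (cases "1 \<le> i \<and> i \<le> n") (auto simp: block_def)
qed

lemma block_trunc:
  assumes "b + k - 1 \<le> n"
  shows "block k b (trunc n mu) = block k b mu"
proof
  fix i
  show "block k b (trunc n mu) i = block k b mu i"
    using assms by (cases "i \<le> k") (simp_all add: block_def trunc_def)
qed

text \<open>Monotonicity squeezes \<open>\<mu>\<close> on the block \<open>[b, b+k-1]\<close> into the values \<open>[b, b+k-1]\<close>,
  so \<open>\<tau>\<^sub>\<ell>\<close> acts on the block as \<open>\<tau>\<^sub>k\<close>.\<close>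

lemma block_tau:
  assumes mu: "mu \<in> Part l l" and b: "1 \<le> b" "b + k - 1 \<le> l"
    and top: "mu b = b + k - 1" and bottom: "mu (b + k - 1) = b"
  shows "block k (l + 2 - k - b) (tau l l mu) = tau k k (block k b mu)"
proof
  fix i
  note P = PartD[OF mu]
  show "block k (l + 2 - k - b) (tau l l mu) i = tau k k (block k b mu) i"
  proof (cases "1 \<le> i \<and> i \<le> k")
    case True
    define x where "x = mu (b + k - i)"
    have "mu (b + k - 1) \<le> x" unfolding x_def by (rule P(2)) (use True b in auto)
    moreover have "x \<le> mu b" unfolding x_def by (rule P(2)) (use True b in auto)
    ultimately have x: "b \<le> x" "x \<le> b + k - 1" using top bottom by simp_all
    have "block k (l + 2 - k - b) (tau l l mu) i
        = tau l l mu (l + 1 - (b + k - i)) - (l + 2 - k - b) + 1"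
      using True b by (simp add: block_def add.commute[of k b])
    also have "\<dots> = k + b - x"
    proof -
      have "1 \<le> l + 1 - (b + k - i)" "l + 1 - (b + k - i) \<le> l"
        and "l + 1 - (l + 1 - (b + k - i)) = b + k - i" using True b by auto
      then have "tau l l mu (l + 1 - (b + k - i)) = l + 1 - x" by (simp add: tau_apply x_def)
      then show ?thesis using b x by simp
    qed
    also have "\<dots> = tau k k (block k b mu) i"
    proof -
      have "1 \<le> k + 1 - i" "k + 1 - i \<le> k" "b + (k + 1 - i) - 1 = b + k - i" using True by auto
      then have "block k b mu (k + 1 - i) = x - b + 1" by (simp add: block_def x_def)
      then show ?thesis using True x by (simp add: tau_apply)
    qed
    finally show ?thesis .
  next
    case False
    then show ?thesis by (simp only: block_def tau_def if_not_P if_False)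
  qed
qed

definition anchor :: "nat \<Rightarrow> nat \<Rightarrow> (nat \<Rightarrow> nat) \<Rightarrow> (nat \<Rightarrow> nat) \<Rightarrow> nat \<Rightarrow> bool" where
  "anchor k l lam mu b \<longleftrightarrow> b \<in> {1..l - k + 1}
      \<and> mu b = b + k - 1 \<and> mu (b + k - 1) = b
      \<and> (\<forall>i. 1 \<le> i \<and> i < b \<longrightarrow> mu (mu i) > i)
      \<and> (\<forall>i. b + k - 1 < i \<and> i \<le> l \<longrightarrow> mu (mu i) < i)
      \<and> block k b mu \<in> {lam, tau k k lam}"

lemma anchor_base:
  assumes "lam \<in> Psq k"
  shows "anchor k k lam lam 1"
  using assms block_1[of lam k] by (auto simp: anchor_def Psq_def)

lemma anchor_base_cases:
  assumes "mu \<in> Part k k" and "anchor k k lam mu b"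
  shows "mu \<in> {lam, tau k k lam}"
proof -
  have "b = 1" using assms(2) by (auto simp: anchor_def)
  then show ?thesis using assms block_1[OF assms(1)] by (simp add: anchor_def)
qed

lemma anchor_tau:
  assumes mu: "mu \<in> Part l l" and anc: "anchor k l lam mu b"
    and lam: "lam \<in> Part k k" and "1 \<le> k" and "k \<le> l"
  shows "anchor k l lam (tau l l mu) (l + 2 - k - b)"
proof -
  note P = PartD[OF mu]
  define m where "m = tau l l mu"
  define b' where "b' = l + 2 - k - b"
  have b: "1 \<le> b" "b + k - 1 \<le> l"
    and top: "mu b = b + k - 1" and bottom: "mu (b + k - 1) = b"
    and below: "\<And>i. 1 \<le> i \<Longrightarrow> i < b \<Longrightarrow> mu (mu i) > i"
    and above: "\<And>i. b + k - 1 < i \<Longrightarrow> i \<le> l \<Longrightarrow> mu (mu i) < i"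
    and blk: "block k b mu \<in> {lam, tau k k lam}"
    using anc \<open>1 \<le> k\<close> \<open>k \<le> l\<close> unfolding anchor_def by auto
  have b': "1 \<le> b'" "b' \<le> l - k + 1" "b' + k - 1 = l + 1 - b"
    using b \<open>1 \<le> k\<close> by (auto simp: b'_def)
  have mm: "m (m i) = l + 1 - mu (mu (l + 1 - i))" if "1 \<le> i" "i \<le> l" for i
  proof -
    define x where "x = mu (l + 1 - i)"
    have x: "1 \<le> x" "x \<le> l" using P(1)[of "l + 1 - i"] that by (simp_all add: x_def)
    have "m (m i) = m (l + 1 - x)" using that by (simp add: m_def tau_apply x_def)
    also have "\<dots> = l + 1 - mu x" using x by (simp add: m_def tau_apply)
    finally show ?thesis by (simp add: x_def)
  qed
  have "m b' = b' + k - 1" "m (b' + k - 1) = b'"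
    using b b' top bottom \<open>1 \<le> k\<close> by (simp_all add: m_def tau_apply b'_def add.commute[of k b])
  moreover have "m (m i) > i" if "1 \<le> i" "i < b'" for i
  proof -
    have "mu (mu (l + 1 - i)) < l + 1 - i" by (rule above) (use that b' in auto)
    then show ?thesis using mm[of i] that b' by linarith
  qed
  moreover have "m (m i) < i" if "b' + k - 1 < i" "i \<le> l" for i
  proof -
    have "l + 1 - i < mu (mu (l + 1 - i))" by (rule below) (use that b' in auto)
    moreover have "mu (mu (l + 1 - i)) \<le> l"
      using P(1)[of "mu (l + 1 - i)"] P(1)[of "l + 1 - i"] that b' by auto
    ultimately show ?thesis using mm[of i] that b' by linarith
  qed
  moreover have "block k b' m \<in> {lam, tau k k lam}"
    using blk block_tau[OF mu b top bottom] tau_tau[OF lam] by (auto simp: m_def b'_def)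
  ultimately have "anchor k l lam m b'" using b' unfolding anchor_def by auto
  then show ?thesis by (simp add: m_def b'_def)
qed

lemma anchor_extend:
  assumes mu: "mu \<in> Part (Suc n) (Suc n)" and tr: "trunc n mu \<in> Part n n"
    and anc: "anchor k n lam (trunc n mu) b" and "1 \<le> k" and "k \<le> n"
  shows "anchor k (Suc n) lam mu b"
proof -
  define v where "v = trunc n mu"
  note P = PartD[OF mu]
  have v: "v i = mu i" if "i \<le> n" for i using that by (simp add: v_def trunc_def)
  have b: "1 \<le> b" "b \<le> n" "b + k - 1 \<le> n" "b \<le> n - k + 1"
    and top: "v b = b + k - 1" and bottom: "v (b + k - 1) = b"
    and below: "\<And>i. 1 \<le> i \<Longrightarrow> i < b \<Longrightarrow> v (v i) > i"
    and above: "\<And>i. b + k - 1 < i \<Longrightarrow> i \<le> n \<Longrightarrow> v (v i) < i"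
    and blk: "block k b v \<in> {lam, tau k k lam}"
    using anc assms(4,5) unfolding anchor_def v_def by auto
  have "mu (mu i) < i" if i: "b + k - 1 < i" "i \<le> Suc n" for i
  proof (cases "i \<le> n")
    case True
    then show ?thesis using above[OF i(1)] trunc_comp[OF tr] i b by (simp add: v_def)
  next
    case False
    have "mu i \<le> mu (b + k - 1)" by (rule P(2)) (use i b \<open>1 \<le> k\<close> in auto)
    then have "mu i \<le> b" using bottom v[of "b + k - 1"] b by simp
    then have "mu (mu i) = v (mu i)" using v[of "mu i"] b by simp
    moreover have "v (mu i) \<le> n"
      using PartD(1)[OF tr[folded v_def], of "mu i"] P(1)[of i] \<open>mu i \<le> b\<close> i b by simp
    ultimately show ?thesis using False i by simp
  qed
  moreover have "mu (mu i) > i" if "1 \<le> i" "i < b" for i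
    using below[OF that] trunc_comp[OF tr, of i] that b by (simp add: v_def)
  ultimately show ?thesis
    using b top bottom blk v[of b] v[of "b + k - 1"] block_trunc[OF b(3), of mu]
    unfolding anchor_def v_def by auto
qed

lemma anchor_restrict:
  assumes mu: "mu \<in> Part (Suc n) (Suc n)" and anc: "anchor k (Suc n) lam mu b"
    and "mu 1 \<le> n" and b: "b + k - 1 \<le> n" and "1 \<le> k"
  shows "anchor k n lam (trunc n mu) b"
proof -
  define v where "v = trunc n mu"
  have tr: "v \<in> Part n n" using trunc_Part[OF mu \<open>mu 1 \<le> n\<close>] by (simp add: v_def)
  have v: "v i = mu i" if "i \<le> n" for i using that by (simp add: v_def trunc_def)
  have "1 \<le> b" "mu b = b + k - 1" "mu (b + k - 1) = b"
    and below: "\<And>i. 1 \<le> i \<Longrightarrow> i < b \<Longrightarrow> mu (mu i) > i"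
    and above: "\<And>i. b + k - 1 < i \<Longrightarrow> i \<le> Suc n \<Longrightarrow> mu (mu i) < i"
    and "block k b mu \<in> {lam, tau k k lam}"
    using anc unfolding anchor_def by auto
  moreover have "v (v i) = mu (mu i)" if "1 \<le> i" "i \<le> n" for i
    using trunc_comp[OF tr[unfolded v_def] that] by (simp add: v_def)
  ultimately show ?thesis
    using b \<open>1 \<le> k\<close> v[of b] v[of "b + k - 1"] block_trunc[OF b, of mu]
    unfolding anchor_def v_def by auto
qed

lemma anchor_cases:
  assumes mu: "mu \<in> Part (Suc n) (Suc n)" and anc: "anchor k (Suc n) lam mu b"
    and "1 \<le> k" and "k \<le> n"
  shows "(mu 1 \<le> n \<and> b + k - 1 \<le> n)
    \<or> (tau (Suc n) (Suc n) mu 1 \<le> n \<and> (Suc n + 2 - k - b) + k - 1 \<le> n)"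
proof -
  note P = PartD[OF mu]
  have b: "1 \<le> b" "b + k - 1 \<le> Suc n"
    and top: "mu b = b + k - 1" and bottom: "mu (b + k - 1) = b"
    and below: "\<And>i. 1 \<le> i \<Longrightarrow> i < b \<Longrightarrow> mu (mu i) > i"
    using anc assms(3,4) unfolding anchor_def by auto
  have tau1: "tau (Suc n) (Suc n) mu 1 = Suc n + 1 - mu (Suc n)" by (simp add: tau_apply)
  show ?thesis
  proof (cases "mu 1 \<le> n \<and> b + k - 1 \<le> n")
    case False
    have "1 < b \<and> 1 < mu (Suc n)"
    proof (cases "mu 1 \<le> n")
      case True
      with False b have "b + k - 1 = Suc n" by linarith
      then show ?thesis using bottom \<open>k \<le> n\<close> by auto
    next
      case False
      then have "mu 1 = Suc n" using P(1)[of 1] by simp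
      then have "b \<noteq> 1" using top \<open>k \<le> n\<close> by auto
      then show ?thesis using below[of 1] b \<open>mu 1 = Suc n\<close> by simp
    qed
    then show ?thesis using tau1 b by auto
  qed simp
qed

lemma anchor_recursion:
  assumes lam: "lam \<in> Part k k" and "1 \<le> k" and "k \<le> n"
    and S: "S \<subseteq> Part n n"
    and S_anchor: "\<And>m. m \<in> Part n n \<Longrightarrow> m \<in> S \<longleftrightarrow> (\<exists>b. anchor k n lam m b)"
    and mu: "mu \<in> Part (Suc n) (Suc n)"
  defines "Pd \<equiv> {m \<in> Part (Suc n) (Suc n). trunc n m \<in> S}"
  shows "mu \<in> Pd \<union> tau (Suc n) (Suc n) ` Pd \<longleftrightarrow> (\<exists>b. anchor k (Suc n) lam mu b)"
proof
  have Pd_anchor: "\<exists>b. anchor k (Suc n) lam m b" if "m \<in> Pd" for m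
    using that S S_anchor[of "trunc n m"] anchor_extend[of m n k lam] \<open>1 \<le> k\<close> \<open>k \<le> n\<close>
    by (auto simp: Pd_def)
  assume "mu \<in> Pd \<union> tau (Suc n) (Suc n) ` Pd"
  then show "\<exists>b. anchor k (Suc n) lam mu b"
  proof
    assume "mu \<in> tau (Suc n) (Suc n) ` Pd"
    then obtain m where m: "m \<in> Pd" and mu: "mu = tau (Suc n) (Suc n) m" ..
    obtain b where "anchor k (Suc n) lam m b" using Pd_anchor[OF m] ..
    then have "anchor k (Suc n) lam mu (Suc n + 2 - k - b)"
      using anchor_tau[OF _ _ lam \<open>1 \<le> k\<close>] m mu \<open>k \<le> n\<close> by (simp add: Pd_def)
    then show ?thesis ..
  qed (rule Pd_anchor)
next
  have anchor_Pd: "m \<in> Pd"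
    if "m \<in> Part (Suc n) (Suc n)" "anchor k (Suc n) lam m b" "m 1 \<le> n" "b + k - 1 \<le> n" for m b
    using anchor_restrict[OF that \<open>1 \<le> k\<close>] trunc_Part[OF that(1,3)] S_anchor that(1)
    by (auto simp: Pd_def)
  assume "\<exists>b. anchor k (Suc n) lam mu b"
  then obtain b where anc: "anchor k (Suc n) lam mu b" ..
  show "mu \<in> Pd \<union> tau (Suc n) (Suc n) ` Pd"
    using anchor_cases[OF mu anc \<open>1 \<le> k\<close> \<open>k \<le> n\<close>]
  proof
    assume "mu 1 \<le> n \<and> b + k - 1 \<le> n"
    then show ?thesis using anchor_Pd[OF mu anc] by blast
  next
    assume "tau (Suc n) (Suc n) mu 1 \<le> n \<and> (Suc n + 2 - k - b) + k - 1 \<le> n"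
    moreover have "anchor k (Suc n) lam (tau (Suc n) (Suc n) mu) (Suc n + 2 - k - b)"
      using anchor_tau[OF mu anc lam \<open>1 \<le> k\<close>] \<open>k \<le> n\<close> by simp
    ultimately have "tau (Suc n) (Suc n) mu \<in> Pd"
      using anchor_Pd tau_Part[OF mu] by blast
    then show ?thesis using tau_tau[OF mu] by (metis UnI2 image_eqI)
  qed
qed

theorem Pgen_iff_anchor:
  assumes lam: "lam \<in> Psq k" and "1 \<le> k" and mu: "mu \<in> Part (k + d) (k + d)"
  shows "mu \<in> Pgen lam k d \<longleftrightarrow> (\<exists>b. anchor k (k + d) lam mu b)"
proof -
  have lamP: "lam \<in> Part k k" using lam by (simp add: Psq_def)
  show ?thesis
    using mu
  proof (induction d arbitrary: mu)
    case 0
    have "anchor k k lam (tau k k lam) 1"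
      using anchor_tau[OF lamP anchor_base[OF lam] lamP \<open>1 \<le> k\<close> order.refl] by simp
    then show ?case
      using anchor_base[OF lam] anchor_base_cases[of mu k] 0 by auto
  next
    case (Suc d)
    then show ?case
      using anchor_recursion[OF lamP \<open>1 \<le> k\<close> _ Pgen_Part[OF lamP, of d], of mu]
      by (simp add: Let_def)
  qed
qed

theorem theorem3p1:
  fixes k l :: nat and lam mu :: "nat \<Rightarrow> nat"
  assumes "1 \<le> k" and "k \<le> l"
    and "lam \<in> Psq k" and "mu \<in> Part l l"
  shows "mu \<in> Pell lam k l \<longleftrightarrow>
    (\<exists>b \<in> {1..l - k + 1}.
        mu b = b + k - 1 \<and> mu (b + k - 1) = b
      \<and> (\<forall>i. 1 \<le> i \<and> i < b \<longrightarrow> mu (mu i) > i)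
      \<and> (\<forall>i. b + k - 1 < i \<and> i \<le> l \<longrightarrow> mu (mu i) < i)
      \<and> (\<lambda>i. if 1 \<le> i \<and> i \<le> k then mu (b + i - 1) - b + 1 else 0) \<in> {lam, tau k k lam})"
proof -
  have "l = k + (l - k)" using \<open>k \<le> l\<close> by simp
  then have "mu \<in> Pell lam k l \<longleftrightarrow> (\<exists>b. anchor k l lam mu b)"
    using Pgen_iff_anchor[OF assms(3,1), of mu "l - k"] assms(4) by (simp add: Pell_def)
  then show ?thesis unfolding anchor_def block_def by blast
qed

end
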